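(* For relatively prime integers $r, s$ put $u = r^2 + s^2$, $v = 2r^2 - s^2$, and $\mathcal{S} = \{\pm u(u+v),\ \pm u(u-v),\ \pm v(u+v),\ \pm v(u-v)\}$. Then for all but finitely many pairs $(r,s)$ of relatively prime integers with $r \neq 0$, no element of $\mathcal{S}$ represents the same class in $\mathbb{Q}^\times/(\mathbb{Q}^\times)^2$ as any of $uv, -uv, u^2-v^2, -(u^2-v^2)$.
   Context: $\mathbb{Q}^\times/(\mathbb{Q}^\times)^2$ denotes the group of nonzero rationals modulo nonzero squares; two nonzero rationals represent the same class iff their quotient is a square of a rational. *)

theory Defs
  imports Complex_Main "HOL-Computational_Algebra.Primes"
begin

definition same_sq_class :: "rat \<Rightarrow> rat \<Rightarrow> bool" where
  "same_sq_class a b \<longleftrightarrow> a \<noteq> 0 \<and> b \<noteq> 0 \<and> (\<exists>q::rat. a / b = q ^ 2)"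

definition uval :: "int \<Rightarrow> int \<Rightarrow> int" where
  "uval r s = r ^ 2 + s ^ 2"

definition vval :: "int \<Rightarrow> int \<Rightarrow> int" where
  "vval r s = 2 * r ^ 2 - s ^ 2"

definition Sset :: "int \<Rightarrow> int \<Rightarrow> int set" where
  "Sset r s = (let u = uval r s; v = vval r s in
     {u * (u + v), - (u * (u + v)), u * (u - v), - (u * (u - v)),
      v * (u + v), - (v * (u + v)), v * (u - v), - (v * (u - v))})"

definition Tset :: "int \<Rightarrow> int \<Rightarrow> int set" where
  "Tset r s = (let u = uval r s; v = vval r s in
     {u * v, - (u * v), u ^ 2 - v ^ 2, - (u ^ 2 - v ^ 2)})"

end

theory Submission
  imports Defs "HOL-Computational_Algebra.Nth_Powers"
begin

text \<open>
  If x in S and y in T lie in the same square class, then x y is a nonzero square.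
  Since u + v = 3 r^2 and u - v = 2 s^2 - r^2, each such product is a square times one of
  3 u, 3 v, u (u - v), v (u - v), up to sign.  The first two are excluded because 3 divides
  neither u nor v.  For the last two the factors are coprime, so each is a square up to sign;
  apart from sign patterns that fail modulo 3 this yields a solution of
  r^2 + s^2 = m^2, r^2 - 2 s^2 = n^2, or of 2 r^2 - s^2 = m^2, 2 s^2 - r^2 = n^2.
  Fermat descent shows that the first system forces s = 0, and that the second forces
  r^2 = s^2, since otherwise it produces coprime a, b with a \<noteq> 0 and both a^2 + b^2 and
  4 a^2 + b^2 squares, which descends through the quartic E^4 - E^2 F^2 + F^4 = g^2.
  Hence only pairs with |r|, |s| \<le> 1 remain.
\<close>

section \<open>Coprime factorisations and small residues\<close>

lemma coprime_mult_eq_power_pos: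
  fixes a b c :: int
  assumes "coprime a b" "a * b = c ^ n" "0 < a" "0 < b"
  obtains x y where "a = x ^ n" "b = y ^ n"
proof -
  have "c ^ n = \<bar>c\<bar> ^ n"
    using assms(2-4) by (metis abs_of_pos mult_pos_pos power_abs)
  then have "nat a * nat b = nat \<bar>c\<bar> ^ n"
    using assms(2-4) by (metis abs_ge_zero nat_mult_distrib nat_power_eq order_less_imp_le)
  moreover have "coprime (nat a) (nat b)"
    using assms(1,3,4) by (simp add: coprime_int_iff [symmetric])
  ultimately have "is_nth_power n (nat a)" "is_nth_power n (nat b)"
    using is_nth_power_mult_coprime_natD[of "nat a" "nat b" n] assms(3,4) by auto
  then obtain x y where "nat a = x ^ n" "nat b = y ^ n"
    by (auto elim!: is_nth_powerE)
  then have "a = int x ^ n" "b = int y ^ n"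
    using assms(3,4) by (metis int_nat_eq of_nat_power order_less_imp_le)+
  then show thesis by (rule that)
qed

lemma coprime_mult_eq_square:
  fixes a b c :: int
  assumes "coprime a b" "a * b = c^2" "0 < a" "c \<noteq> 0"
  obtains x y where "a = x^2" "b = y^2"
proof -
  have "0 < a * b" using assms(2,4) by simp
  then have "0 < b" using assms(3) by (simp add: zero_less_mult_iff)
  then show thesis using coprime_mult_eq_power_pos assms(1-3) that by blast
qed

lemma coprime_mult_eq_prime_times_power:
  fixes a b z p :: int
  assumes "prime p" "coprime a b" "a * b = p * z ^ n" "0 < a" "0 < b" "0 < n"
  obtains x y where "coprime x y" "\<bar>z\<bar> = \<bar>x * y\<bar>"
    "(a = p * x ^ n \<and> b = y ^ n) \<or> (a = x ^ n \<and> b = p * y ^ n)"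
proof -
  have split: "\<exists>x y. coprime x y \<and> \<bar>z\<bar> = \<bar>x * y\<bar> \<and> c = p * x ^ n \<and> d = y ^ n"
    if cd: "coprime c d" "c * d = p * z ^ n" "0 < c" "0 < d" and "p dvd c" for c d
  proof -
    obtain c' where c: "c = p * c'" using \<open>p dvd c\<close> by blast
    have "0 < p" using assms(1) prime_gt_0_int by blast
    then have "c' * d = z ^ n" "0 < c'" "coprime c' d"
      using cd unfolding c by (simp_all add: zero_less_mult_iff)
    then obtain x y where xy: "c' = x ^ n" "d = y ^ n"
      using coprime_mult_eq_power_pos \<open>0 < d\<close> by metis
    have "\<bar>x * y\<bar> ^ n = \<bar>z\<bar> ^ n"
      using \<open>c' * d = z ^ n\<close> unfolding xy by (simp add: power_mult_distrib flip: power_abs)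
    then have "\<bar>z\<bar> = \<bar>x * y\<bar>"
      using assms(6) by (simp add: power_eq_iff_eq_base)
    moreover have "coprime x y" using \<open>coprime c' d\<close> assms(6) unfolding xy by simp
    ultimately show ?thesis using c xy by blast
  qed
  have "p dvd a * b" using assms(3) by simp
  then have "p dvd a \<or> p dvd b" using assms(1) prime_dvd_mult_iff by blast
  then show thesis
  proof
    assume "p dvd a"
    then show thesis using split[OF assms(2-5)] that by blast
  next
    assume "p dvd b"
    moreover have "coprime b a" "b * a = p * z ^ n"
      using assms(2,3) by (simp_all add: coprime_commute mult.commute)
    ultimately obtain x y where "coprime x y" "\<bar>z\<bar> = \<bar>x * y\<bar>" "b = p * x ^ n" "a = y ^ n"
      using split[of b a] assms(4,5) by blast
    then show thesis using that[of y x] by (simp add: coprime_commute mult.commute)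
  qed
qed

lemma half_sum_and_difference:
  fixes g h :: int
  assumes "odd g" "odd h" "\<bar>h\<bar> < g"
  obtains u v where "g = u + v" "h = v - u" "0 < u" "0 < v" "4 * (u * v) = g^2 - h^2"
proof -
  have "even (g - h)" "even (g + h)" using assms(1,2) by simp_all
  then obtain u v where u: "g - h = 2 * u" and v: "g + h = 2 * v" by (meson evenE)
  then have g: "g = u + v" and h: "h = v - u" by linarith+
  have "4 * (u * v) = g^2 - h^2"
    unfolding g h by (simp add: power2_eq_square algebra_simps)
  moreover have "0 < u" "0 < v" using u v assms(3) by linarith+
  ultimately show thesis using g h that by blast
qed

lemma is_unit_if_square_dvd_small:
  fixes c k :: int
  assumes "c^2 dvd k" "0 < k" "k < 4"
  shows "is_unit c"
proof -
  have "\<bar>c\<bar>^2 < 2^2" using zdvd_imp_le[OF assms(1,2)] assms(3) by simp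
  then have "\<bar>c\<bar> < 2" using power_less_imp_less_base by fastforce
  moreover have "c \<noteq> 0" using assms by auto
  ultimately have "\<bar>c\<bar> = 1" by linarith
  then show ?thesis by (metis abs_dvd_iff dvd_refl)
qed

lemma coprimeI_mult_eq_small_multiple:
  fixes a b k z :: int
  assumes "a * b = k * z" "0 < k" "k < 4"
    and "\<And>d. d dvd a \<Longrightarrow> d dvd b \<Longrightarrow> coprime d z"
  shows "coprime a b"
proof (rule coprimeI)
  fix d assume "d dvd a" "d dvd b"
  then have "d * d dvd a * b" by (rule mult_dvd_mono)
  then have "d^2 dvd k * z" and "coprime (d^2) z"
    using assms(1,4) \<open>d dvd a\<close> \<open>d dvd b\<close> by (simp_all add: power2_eq_square)
  then have "d^2 dvd k" using coprime_dvd_mult_left_iff by blast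
  then show "is_unit d" using is_unit_if_square_dvd_small assms(2,3) by blast
qed

lemma square_mod_3: "(x::int)^2 mod 3 = (if 3 dvd x then 0 else 1)"
proof -
  have "x^2 mod 3 = (x mod 3)^2 mod 3" by (simp add: power_mod)
  moreover have "x mod 3 = 0 \<or> x mod 3 = 1 \<or> x mod 3 = 2" by linarith
  ultimately show ?thesis by (elim disjE) (simp_all add: dvd_eq_mod_eq_0)
qed

lemma three_dvd_square_iff: "(3::int) dvd x^2 \<longleftrightarrow> 3 dvd x"
  by (rule prime_dvd_power_iff) simp_all

lemma three_dvd_sum_of_squares:
  fixes x y :: int
  assumes "3 dvd x^2 + y^2"
  shows "3 dvd x" and "3 dvd y"
proof -
  have "(x^2 mod 3 + y^2 mod 3) mod 3 = 0"
    using assms by (simp add: dvd_eq_mod_eq_0 mod_add_eq)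
  moreover have "x^2 mod 3 \<in> {0, 1}" "y^2 mod 3 \<in> {0, 1}"
    unfolding square_mod_3 by simp_all
  ultimately have "x^2 mod 3 = 0" "y^2 mod 3 = 0" by auto
  then show "3 dvd x" "3 dvd y" unfolding square_mod_3 by (simp_all split: if_splits)
qed

lemma square_mod_4: "(x::int)^2 mod 4 = (if even x then 0 else 1)"
proof -
  have "x^2 mod 4 = (x mod 4)^2 mod 4" by (simp add: power_mod)
  moreover have "x mod 4 = 0 \<or> x mod 4 = 1 \<or> x mod 4 = 2 \<or> x mod 4 = 3" by linarith
  moreover have "even x \<longleftrightarrow> even (x mod 4)" by presburger
  ultimately show ?thesis by (elim disjE) simp_all
qed

lemma odd_if_coprime_even:
  fixes a b :: int
  assumes "coprime a b" "even b"
  shows "odd a"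
  using assms coprime_common_divisor[of a b 2] by auto

lemma odd_if_square_eq_diff_double_square:
  fixes r s n :: int
  assumes "coprime r s" "r^2 - 2 * s^2 = n^2 \<or> 2 * s^2 - r^2 = n^2"
  shows "odd r"
proof
  assume "even r"
  then have "odd s" using assms(1) odd_if_coprime_even coprime_commute by blast
  then show False
    using assms(2) \<open>even r\<close> square_mod_4[of r] square_mod_4[of s] square_mod_4[of n]
    by (auto split: if_splits) presburger+
qed

lemma not_3_dvd_sum_of_coprime_squares:
  fixes r s :: int
  assumes "coprime r s"
  shows "\<not> 3 dvd r^2 + s^2"
proof
  assume "3 dvd r^2 + s^2"
  then have "is_unit (3::int)"
    using coprime_common_divisor[OF assms] three_dvd_sum_of_squares by blast
  then show False by simp
qed

lemma not_3_dvd_double_diff_of_coprime_squares: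
  fixes r s :: int
  assumes "coprime r s"
  shows "\<not> 3 dvd 2 * r^2 - s^2"
proof
  assume "3 dvd 2 * r^2 - s^2"
  then have "3 dvd 3 * r^2 - (2 * r^2 - s^2)" by (rule dvd_diff[OF dvd_triv_left])
  moreover have "3 * r^2 - (2 * r^2 - s^2) = r^2 + s^2" by simp
  ultimately show False using not_3_dvd_sum_of_coprime_squares[OF assms] by simp
qed

lemma square_ne_double_square_if_coprime:
  fixes r s :: int
  assumes "coprime r s"
  shows "r^2 \<noteq> 2 * s^2"
proof
  assume h: "r^2 = 2 * s^2"
  then have "even r" by (metis dvd_triv_left even_power pos2)
  then obtain r' where "r = 2 * r'" by blast
  then have "s^2 = 2 * r'^2" using h by (simp add: power_mult_distrib)
  then have "even s" by (metis dvd_triv_left even_power pos2)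
  then show False using assms \<open>even r\<close> odd_if_coprime_even by blast
qed

lemma coprime_mult_diff_squares:
  fixes r s :: int
  assumes "coprime r s"
  shows "coprime (r * s) (r^2 - s^2)"
proof -
  have "coprime r (r^2 - s^2)"
  proof (rule coprimeI)
    fix d assume d: "d dvd r" "d dvd r^2 - s^2"
    have "s^2 = r * r - (r^2 - s^2)" by (simp add: power2_eq_square)
    then have "d dvd s^2" using d by (metis dvd_diff dvd_mult2)
    then show "is_unit d" using d(1) assms coprime_common_divisor by (metis coprime_power_right_iff)
  qed
  moreover have "coprime s (r^2 - s^2)"
  proof (rule coprimeI)
    fix d assume d: "d dvd s" "d dvd r^2 - s^2"
    have "r^2 = (r^2 - s^2) + s * s" by (simp add: power2_eq_square)
    then have "d dvd r^2" using d by (metis dvd_add dvd_mult2)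
    then show "is_unit d" using d(1) assms coprime_common_divisor
      by (metis coprime_commute coprime_power_right_iff)
  qed
  ultimately show ?thesis by simp
qed

lemma is_unit_if_dvd_3_times_coprime_squares:
  fixes r s c :: int
  assumes "coprime r s" "c dvd 3 * r^2" "c dvd 3 * s^2" "\<not> 3 dvd c"
  shows "is_unit c"
proof -
  have "gcd (3 * r^2) (3 * s^2) = 3"
    using assms(1) gcd_mult_distrib_int[of 3 "r^2" "s^2"] by simp
  then have "\<bar>c\<bar> dvd 3" using assms(2,3) by (metis abs_dvd_iff gcd_greatest)
  moreover have "prime (3::int)" by simp
  ultimately have "\<bar>c\<bar> = 1 \<or> \<bar>c\<bar> = 3"
    unfolding prime_int_iff by (meson abs_ge_zero)
  moreover have "\<bar>c\<bar> \<noteq> 3" using assms(4) by (metis dvd_abs_iff dvd_refl)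
  ultimately have "\<bar>c\<bar> = 1" by linarith
  then show ?thesis by (metis abs_dvd_iff dvd_refl)
qed

lemma is_unit_if_odd_dvd_4_times_coprime_squares:
  fixes k l c :: int
  assumes "coprime k l" "odd c" "c dvd 4 * k^2" "c dvd 4 * l^2"
  shows "is_unit c"
proof -
  have "(4::int) = 2^2" by simp
  then have "coprime c 4" using assms(2) by (metis coprime_power_right_iff coprime_right_2_iff_odd)
  then have "c dvd k^2" "c dvd l^2"
    using assms(3,4) coprime_dvd_mult_right_iff by auto
  moreover have "coprime (k^2) (l^2)" using assms(1) by simp
  ultimately show ?thesis using coprime_common_divisor by blast
qed

section \<open>The pair a^2 + b^2, 4 a^2 + b^2\<close>

lemma quartic_factorization:
  fixes E F g :: int
  assumes cop: "coprime E F" and "odd E" "even F" "F \<noteq> 0"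
    and quartic: "E^4 - E^2 * F^2 + F^4 = g^2"
  obtains k l where "coprime k l" "F^2 = 4 * k^2 * l^2"
    "E^2 = (l^2 + 3 * k^2) * (l^2 - k^2) \<or> E^2 = (3 * l^2 - k^2) * (l^2 + k^2)"
proof -
  obtain f where F: "F = 2 * f" using \<open>even F\<close> by blast
  define H where "H = E^2 - 2 * f^2"
  have "f \<noteq> 0" using F \<open>F \<noteq> 0\<close> by simp
  have "odd H" using \<open>odd E\<close> unfolding H_def by simp
  have G: "\<bar>g\<bar>^2 = H^2 + 12 * f^4"
    using quartic unfolding H_def F by (simp add: power2_eq_square power4_eq_xxxx algebra_simps)
  then have "odd (\<bar>g\<bar>^2)" using \<open>odd H\<close> by simp
  then have "odd \<bar>g\<bar>" by simp
  moreover have "H^2 < g^2" using G \<open>f \<noteq> 0\<close> by simp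
  then have "\<bar>H\<bar> < \<bar>g\<bar>" using abs_le_square_iff[of g H] by linarith
  ultimately obtain U V where UV: "\<bar>g\<bar> = U + V" "H = V - U" "0 < U" "0 < V"
    and "4 * (U * V) = \<bar>g\<bar>^2 - H^2"
    using half_sum_and_difference \<open>odd H\<close> by blast
  then have prod: "U * V = 3 * f^4" using G by simp
  have "coprime U V"
  proof (rule coprimeI_mult_eq_small_multiple[OF prod])
    fix d assume "d dvd U" "d dvd V"
    then have "d dvd H" using UV by simp
    have "coprime d f"
    proof (rule coprimeI)
      fix d' assume "d' dvd d" "d' dvd f"
      then have "d' dvd H + 2 * f^2"
        using dvd_trans[of d' d H] \<open>d dvd H\<close> by (simp add: power2_eq_square)
      then have "d' dvd E^2" unfolding H_def by simp
      moreover have "d' dvd F" using \<open>d' dvd f\<close> F by simp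
      moreover have "coprime (E^2) F" using cop by simp
      ultimately show "is_unit d'" using coprime_common_divisor by blast
    qed
    then show "coprime d (f^4)" by simp
  qed simp_all
  obtain k l where "coprime k l" "\<bar>f\<bar> = \<bar>k * l\<bar>"
    and UV_kl: "(U = 3 * k^4 \<and> V = l^4) \<or> (U = k^4 \<and> V = 3 * l^4)"
    by (rule coprime_mult_eq_prime_times_power[OF _ \<open>coprime U V\<close> prod UV(3,4)]) auto
  have "f^2 = k^2 * l^2"
    using \<open>\<bar>f\<bar> = \<bar>k * l\<bar>\<close> by (metis power2_abs power_mult_distrib)
  then have E2: "E^2 = V - U + 2 * (k^2 * l^2)" using UV unfolding H_def by simp
  have "F^2 = 4 * k^2 * l^2" using \<open>f^2 = k^2 * l^2\<close> unfolding F by simp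
  moreover have "l^4 - 3 * k^4 + 2 * (k^2 * l^2) = (l^2 + 3 * k^2) * (l^2 - k^2)"
    "3 * l^4 - k^4 + 2 * (k^2 * l^2) = (3 * l^2 - k^2) * (l^2 + k^2)"
    by (simp_all add: power2_eq_square power4_eq_xxxx algebra_simps)
  ultimately show thesis using that[of k l] UV_kl E2 \<open>coprime k l\<close> by auto
qed

lemma square_ne_3_diff_times_sum:
  fixes k l E :: int
  assumes "coprime k l" "odd E"
  shows "E^2 \<noteq> (3 * l^2 - k^2) * (l^2 + k^2)"
proof
  assume E2: "E^2 = (3 * l^2 - k^2) * (l^2 + k^2)"
  then have odd: "odd (l^2 + k^2)" using assms(2) by (metis even_mult_iff even_power pos2)
  have "coprime (3 * l^2 - k^2) (l^2 + k^2)"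
  proof (rule coprimeI)
    fix c assume c: "c dvd 3 * l^2 - k^2" "c dvd l^2 + k^2"
    have "(3 * l^2 - k^2) + (l^2 + k^2) = 4 * l^2" "3 * (l^2 + k^2) - (3 * l^2 - k^2) = 4 * k^2"
      by simp_all
    then have "c dvd 4 * l^2" "c dvd 4 * k^2" using c by (metis dvd_add dvd_diff dvd_mult)+
    moreover have "odd c" using c(2) odd dvd_trans by blast
    ultimately show "is_unit c"
      using is_unit_if_odd_dvd_4_times_coprime_squares assms(1) by blast
  qed
  moreover have "0 < l^2 + k^2" using odd by (metis add_nonneg_nonneg even_zero order_le_less zero_le_power2)
  moreover have "E \<noteq> 0" using assms(2) by auto
  ultimately obtain p where p: "3 * l^2 - k^2 = p^2"
    using coprime_mult_eq_square[of "l^2 + k^2" "3 * l^2 - k^2" E] E2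
    by (metis coprime_commute mult.commute)
  then have "3 dvd p^2 + k^2" by (metis add_diff_cancel dvd_triv_left add.commute diff_add_cancel)
  then have "3 dvd p" "3 dvd k" using three_dvd_sum_of_squares by blast+
  then obtain p' k' where "p = 3 * p'" "k = 3 * k'" by (meson dvdE)
  then have "l^2 = 3 * (p'^2 + k'^2)" using p by (simp add: power_mult_distrib)
  then have "3 dvd l^2" by simp
  then have "3 dvd l" by (simp add: three_dvd_square_iff)
  then show False using coprime_common_divisor[OF assms(1) \<open>3 dvd k\<close>] by simp
qed

lemma square_eq_sum_3_times_diff:
  fixes k l E :: int
  assumes "coprime k l" "odd E" and E2: "E^2 = (l^2 + 3 * k^2) * (l^2 - k^2)"
  obtains n where "coprime k n" "odd n" "k^2 + n^2 = l^2" "is_square (4 * k^2 + n^2)"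
proof -
  have odd: "odd (l^2 + 3 * k^2)" "odd (l^2 - k^2)"
    using E2 assms(2) by (metis even_mult_iff even_power pos2)+
  have "coprime (l^2 + 3 * k^2) (l^2 - k^2)"
  proof (rule coprimeI)
    fix c assume c: "c dvd l^2 + 3 * k^2" "c dvd l^2 - k^2"
    have "(l^2 + 3 * k^2) - (l^2 - k^2) = 4 * k^2" "(l^2 + 3 * k^2) + 3 * (l^2 - k^2) = 4 * l^2"
      by simp_all
    then have "c dvd 4 * k^2" "c dvd 4 * l^2" using c by (metis dvd_add dvd_diff dvd_mult)+
    moreover have "odd c" using c(2) odd(2) dvd_trans by blast
    ultimately show "is_unit c"
      using is_unit_if_odd_dvd_4_times_coprime_squares assms(1) by blast
  qed
  moreover have "0 < l^2 + 3 * k^2"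
    using odd(1) by (metis add_nonneg_nonneg even_zero order_le_less zero_le_power2 mult_nonneg_nonneg zero_le_numeral)
  moreover have "E \<noteq> 0" using assms(2) by auto
  ultimately obtain m n where m: "l^2 + 3 * k^2 = m^2" and n: "l^2 - k^2 = n^2"
    using coprime_mult_eq_square E2 by metis
  have "odd n" using odd(2) n by simp
  moreover have "coprime k n"
  proof (rule coprimeI)
    fix d assume "d dvd k" "d dvd n"
    then have "d^2 dvd k^2 + n^2" by simp
    moreover have "k^2 + n^2 = l^2" using n by simp
    ultimately have "d dvd l" by simp
    then show "is_unit d" using coprime_common_divisor[OF assms(1) \<open>d dvd k\<close>] by simp
  qed
  moreover have "4 * k^2 + n^2 = m^2" using m n by simp
  ultimately show thesis using that n by simp
qed

lemma quartic_descent: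
  fixes E F g :: int
  assumes "coprime E F" "odd E" "even F" "F \<noteq> 0" "E^4 - E^2 * F^2 + F^4 = g^2"
  obtains k n where "coprime k n" "odd n" "is_square (k^2 + n^2)" "is_square (4 * k^2 + n^2)"
    "k \<noteq> 0" "\<bar>k\<bar> < \<bar>F\<bar>"
proof -
  obtain k l where "coprime k l" and F2: "F^2 = 4 * k^2 * l^2"
    and "E^2 = (l^2 + 3 * k^2) * (l^2 - k^2) \<or> E^2 = (3 * l^2 - k^2) * (l^2 + k^2)"
    using quartic_factorization assms by blast
  then have "E^2 = (l^2 + 3 * k^2) * (l^2 - k^2)"
    using square_ne_3_diff_times_sum assms(2) by blast
  then obtain n where "coprime k n" "odd n" "k^2 + n^2 = l^2" "is_square (4 * k^2 + n^2)"
    using square_eq_sum_3_times_diff \<open>coprime k l\<close> assms(2) by blast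
  moreover have "k \<noteq> 0" "l \<noteq> 0" using F2 assms(4) by auto
  have "0 < l^2" "0 < k^2" using \<open>k \<noteq> 0\<close> \<open>l \<noteq> 0\<close> by simp_all
  then have "1 < 4 * l^2" "0 < k^2" by linarith+
  then have "k^2 * 1 < k^2 * (4 * l^2)" by (rule mult_strict_left_mono)
  then have "k^2 < F^2" using F2 by (simp add: ac_simps)
  then have "\<bar>k\<bar> < \<bar>F\<bar>" using abs_le_square_iff[of F k] by linarith
  moreover have "is_square (k^2 + n^2)" using \<open>k^2 + n^2 = l^2\<close> by simp
  ultimately show thesis using that \<open>coprime k n\<close> \<open>odd n\<close> \<open>is_square (4 * k^2 + n^2)\<close> \<open>k \<noteq> 0\<close>
    by blast
qed

lemma sum_and_4_sum_squares_parametrization: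
  fixes a b g d :: int
  assumes cop: "coprime a b" and "odd b" "a \<noteq> 0"
    and g: "a^2 + b^2 = g^2" and d: "4 * a^2 + b^2 = d^2"
  obtains E F where "coprime E F" "odd E" "even F" "a^2 = E^2 * F^2"
    "E^4 - E^2 * F^2 + F^4 = g^2"
proof -
  have "odd (4 * a^2 + b^2)" using \<open>odd b\<close> by simp
  then have "odd \<bar>d\<bar>" "odd \<bar>b\<bar>" using d \<open>odd b\<close> by simp_all
  moreover have "0 < a^2" using \<open>a \<noteq> 0\<close> by simp
  then have "b^2 < d^2" using d by linarith
  then have "\<bar>b\<bar> < \<bar>d\<bar>" using abs_le_square_iff[of d b] by linarith
  ultimately obtain U V where UV: "\<bar>d\<bar> = U + V" "\<bar>b\<bar> = V - U" "0 < U" "0 < V"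
    and UV4: "4 * (U * V) = \<bar>d\<bar>^2 - \<bar>b\<bar>^2"
    using half_sum_and_difference[of "\<bar>d\<bar>" "\<bar>b\<bar>"] by (metis abs_abs)
  from UV4 d have prod: "U * V = 1 * a^2" by simp
  have "coprime U V"
  proof (rule coprimeI_mult_eq_small_multiple[OF prod])
    fix c assume "c dvd U" "c dvd V"
    then have "c dvd b" using UV(2) by (metis dvd_abs_iff dvd_diff)
    then have "coprime c a" using cop by (meson coprime_common_divisor coprimeI dvd_trans)
    then show "coprime c (a^2)" by simp
  qed simp_all
  then obtain f e where U: "U = f^2" and V: "V = e^2"
    using coprime_mult_eq_power_pos prod UV(3,4) by (metis mult_1)
  have a2: "a^2 = e^2 * f^2" using prod U V by (simp add: mult.commute)
  have "coprime e f" using \<open>coprime U V\<close> U V by (simp add: coprime_commute)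
  have "b^2 = (e^2 - f^2)^2" using UV(2) U V by (metis power2_abs)
  then have quartic: "e^4 - e^2 * f^2 + f^4 = g^2"
    using g a2 by (simp add: power2_eq_square power4_eq_xxxx algebra_simps)
  have "even a"
    using g square_mod_4[of a] square_mod_4[of b] square_mod_4[of g] \<open>odd b\<close>
    by (auto split: if_splits) presburger+
  then have "even e \<or> even f" using a2 by (metis even_mult_iff even_power power_mult_distrib pos2)
  then show thesis
  proof
    assume "even f"
    then show thesis using that odd_if_coprime_even \<open>coprime e f\<close> quartic a2 by blast
  next
    assume "even e"
    moreover have "f^4 - f^2 * e^2 + e^4 = g^2" "a^2 = f^2 * e^2"
      using quartic a2 by (simp_all add: algebra_simps)
    moreover have "coprime f e" using \<open>coprime e f\<close> by (simp add: coprime_commute)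
    ultimately show thesis using that odd_if_coprime_even by blast
  qed
qed

lemma is_square_sum_and_4_sum_imp_zero:
  fixes a b :: int
  assumes "coprime a b" "odd b" "is_square (a^2 + b^2)" "is_square (4 * a^2 + b^2)"
  shows "a = 0"
  using assms
proof (induction "nat \<bar>a\<bar>" arbitrary: a b rule: less_induct)
  case less
  obtain g d where "a^2 + b^2 = g^2" "4 * a^2 + b^2 = d^2"
    using less.prems(3,4) by (auto elim!: is_nth_powerE)
  show "a = 0"
  proof (rule ccontr)
    assume "a \<noteq> 0"
    then obtain E F where "coprime E F" "odd E" "even F" and aEF: "a^2 = E^2 * F^2"
      and "E^4 - E^2 * F^2 + F^4 = g^2"
      using sum_and_4_sum_squares_parametrization less.prems(1,2) \<open>a^2 + b^2 = g^2\<close>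
        \<open>4 * a^2 + b^2 = d^2\<close> by metis
    moreover have "F \<noteq> 0" using aEF \<open>a \<noteq> 0\<close> by auto
    ultimately obtain k n where kn: "coprime k n" "odd n" "is_square (k^2 + n^2)"
      "is_square (4 * k^2 + n^2)" "k \<noteq> 0" and "\<bar>k\<bar> < \<bar>F\<bar>"
      using quartic_descent by blast
    have "1 \<le> E^2" using \<open>odd E\<close> by (metis even_zero zero_less_power2 int_one_le_iff_zero_less)
    then have "F^2 * 1 \<le> F^2 * E^2" by (intro mult_left_mono) simp_all
    then have "F^2 \<le> a^2" using aEF by (simp add: mult.commute)
    then have "\<bar>F\<bar> \<le> \<bar>a\<bar>" using abs_le_square_iff by blast
    then have "nat \<bar>k\<bar> < nat \<bar>a\<bar>" using \<open>\<bar>k\<bar> < \<bar>F\<bar>\<close> by linarith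
    then show False using less.hyps kn by blast
  qed
qed

section \<open>The pair r^2 + s^2, r^2 - 2 s^2\<close>

lemma sum_and_diff2_squares_parametrization:
  fixes r s m n :: int
  assumes cop: "coprime r s" and "s \<noteq> 0" and m: "r^2 + s^2 = m^2" and n: "r^2 - 2 * s^2 = n^2"
  obtains a b where "coprime a b" "s^2 = 4 * a^2 * b^2" "r^2 = (3 * a^2 + b^2)^2 - 4 * a^2 * b^2"
    "odd r"
proof -
  have "odd r" using odd_if_square_eq_diff_double_square cop n by blast
  have "even s"
    using \<open>odd r\<close> m square_mod_4[of r] square_mod_4[of s] square_mod_4[of m]
    by (auto split: if_splits) presburger+
  then obtain t where s: "s = 2 * t" by blast
  have "odd (r^2 + s^2)" "odd (r^2 - 2 * s^2)" using \<open>odd r\<close> \<open>even s\<close> by simp_all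
  then have "odd \<bar>m\<bar>" "odd \<bar>n\<bar>" using m n by simp_all
  moreover have "0 < s^2" using \<open>s \<noteq> 0\<close> by simp
  then have "n^2 < m^2" using m n by linarith
  then have "\<bar>\<bar>n\<bar>\<bar> < \<bar>m\<bar>" using abs_le_square_iff[of m n] by simp
  ultimately obtain U V where UV: "\<bar>m\<bar> = U + V" "\<bar>n\<bar> = V - U" "0 < U" "0 < V"
    and UV4: "4 * (U * V) = \<bar>m\<bar>^2 - \<bar>n\<bar>^2"
    using half_sum_and_difference by blast
  from UV4 m n have prod: "U * V = 3 * t^2" unfolding s by (simp add: power_mult_distrib)
  have "coprime U V"
  proof (rule coprimeI_mult_eq_small_multiple[OF prod])
    fix d assume "d dvd U" "d dvd V"
    then have "d dvd m" using UV(1) by (metis dvd_abs_iff dvd_add)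
    have "coprime d t"
    proof (rule coprimeI)
      fix d' assume "d' dvd d" "d' dvd t"
      then have "d'^2 dvd m^2" "d'^2 dvd s^2" using \<open>d dvd m\<close> s by (auto intro: dvd_trans)
      then have "d'^2 dvd r^2" using m by (metis add_diff_cancel_right' dvd_diff)
      then have "d' dvd r" by simp
      moreover have "d' dvd s" using \<open>d' dvd t\<close> s by simp
      ultimately show "is_unit d'" using coprime_common_divisor[OF cop] by blast
    qed
    then show "coprime d (t^2)" by simp
  qed simp_all
  obtain x y where "coprime x y" "\<bar>t\<bar> = \<bar>x * y\<bar>"
    and "(U = 3 * x^2 \<and> V = y^2) \<or> (U = x^2 \<and> V = 3 * y^2)"
    by (rule coprime_mult_eq_prime_times_power[OF _ \<open>coprime U V\<close> prod UV(3,4)]) auto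
  then obtain a b where "coprime a b" "\<bar>t\<bar> = \<bar>a * b\<bar>" "\<bar>m\<bar> = 3 * a^2 + b^2"
    using UV(1) by (metis abs_mult_self_eq add.commute coprime_commute mult.commute)
  have "t^2 = a^2 * b^2" using \<open>\<bar>t\<bar> = \<bar>a * b\<bar>\<close> by (metis power2_abs power_mult_distrib)
  then have "s^2 = 4 * a^2 * b^2" unfolding s by (simp add: power_mult_distrib)
  moreover have "m^2 = (3 * a^2 + b^2)^2" using \<open>\<bar>m\<bar> = 3 * a^2 + b^2\<close> by (metis power2_abs)
  ultimately show thesis using that \<open>coprime a b\<close> \<open>odd r\<close> m by simp
qed

lemma square_eq_sum_times_diff2:
  fixes b r s :: int
  assumes cop: "coprime r s" and "s \<noteq> 0" "b \<noteq> 0" and b2: "b^2 = (r^2 + s^2) * (r^2 - 2 * s^2)"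
  shows "is_square (r^2 + s^2)" "is_square (r^2 - 2 * s^2)"
proof -
  have "coprime (r^2 + s^2) (r^2 - 2 * s^2)"
  proof (rule coprimeI)
    fix k assume k: "k dvd r^2 + s^2" "k dvd r^2 - 2 * s^2"
    have "2 * (r^2 + s^2) + (r^2 - 2 * s^2) = 3 * r^2" "(r^2 + s^2) - (r^2 - 2 * s^2) = 3 * s^2"
      by simp_all
    then have "k dvd 3 * r^2" "k dvd 3 * s^2" using k by (metis dvd_add dvd_diff dvd_mult)+
    moreover have "\<not> 3 dvd k" using k(1) not_3_dvd_sum_of_coprime_squares[OF cop] dvd_trans by blast
    ultimately show "is_unit k" using is_unit_if_dvd_3_times_coprime_squares cop by blast
  qed
  moreover have "0 < r^2 + s^2" using \<open>s \<noteq> 0\<close> by (simp add: add_nonneg_pos)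
  ultimately obtain m n where "r^2 + s^2 = m^2" "r^2 - 2 * s^2 = n^2"
    using coprime_mult_eq_square b2 \<open>b \<noteq> 0\<close> by metis
  then show "is_square (r^2 + s^2)" "is_square (r^2 - 2 * s^2)" by simp_all
qed

lemma not_square_eq_2sum_times_diff:
  fixes b c d :: int
  assumes cop: "coprime c d" and "odd c" "odd d" "\<not> 3 dvd c^2 - d^2" "0 < c^2 - d^2"
  shows "b^2 \<noteq> (2 * c^2 + d^2) * (c^2 - d^2)"
proof
  assume b2: "b^2 = (2 * c^2 + d^2) * (c^2 - d^2)"
  have "coprime (2 * c^2 + d^2) (c^2 - d^2)"
  proof (rule coprimeI)
    fix k assume k: "k dvd 2 * c^2 + d^2" "k dvd c^2 - d^2"
    have "(2 * c^2 + d^2) + (c^2 - d^2) = 3 * c^2" "(2 * c^2 + d^2) - 2 * (c^2 - d^2) = 3 * d^2"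
      by simp_all
    then have "k dvd 3 * c^2" "k dvd 3 * d^2" using k by (metis dvd_add dvd_diff dvd_mult)+
    moreover have "\<not> 3 dvd k" using assms(4) k(2) dvd_trans by blast
    ultimately show "is_unit k" using is_unit_if_dvd_3_times_coprime_squares cop by blast
  qed
  moreover have "0 < c^2" using \<open>odd c\<close> by (metis even_zero zero_less_power2)
  then have "0 < 2 * c^2 + d^2" using zero_le_power2[of d] by linarith
  ultimately obtain e where "2 * c^2 + d^2 = e^2"
    using coprime_mult_eq_power_pos b2 \<open>0 < c^2 - d^2\<close> by metis
  then show False
    using square_mod_4[of c] square_mod_4[of d] square_mod_4[of e] \<open>odd c\<close> \<open>odd d\<close>
    by (auto split: if_splits) presburger+
qed

lemma odd_if_square_eq_2sum_times_diff:
  fixes b c d :: int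
  assumes "odd d" and b2: "b^2 = (2 * c^2 + d^2) * (c^2 - d^2)"
  shows "odd c"
proof
  assume "even c"
  then obtain c' where c: "c = 2 * c'" by blast
  have "b^2 + (d^2)^2 = 4 * (8 * c'^4 - c'^2 * d^2)"
    using b2 unfolding c by (simp add: power2_eq_square power4_eq_xxxx algebra_simps)
  then show False using square_mod_4[of b] square_mod_4[of "d^2"] \<open>odd d\<close>
    by (auto split: if_splits) presburger+
qed

lemma square_eq_2sum_times_diff:
  fixes b c d :: int
  assumes cop: "coprime c d" and "odd d" "b \<noteq> 0"
    and b2: "b^2 = (2 * c^2 + d^2) * (c^2 - d^2)"
  obtains e f where "coprime e f" "f \<noteq> 0" "\<bar>f\<bar> \<le> \<bar>c\<bar>" "e^2 + f^2 = c^2" "e^2 - 2 * f^2 = d^2"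
proof -
  have "odd c" using odd_if_square_eq_2sum_times_diff \<open>odd d\<close> b2 by blast
  have "0 < 2 * c^2 + d^2" using \<open>odd d\<close> by (metis add_nonneg_pos even_zero mult_nonneg_nonneg
        zero_le_numeral zero_le_power2 zero_less_power2)
  moreover have "0 < b^2" using \<open>b \<noteq> 0\<close> by simp
  ultimately have "0 < c^2 - d^2" using b2 by (simp add: zero_less_mult_iff)
  show thesis
  proof (cases "3 dvd c^2 - d^2")
    case True
    then obtain Y where Y: "c^2 - d^2 = 3 * Y" by blast
    define X where "X = c^2 - Y"
    have X3: "2 * c^2 + d^2 = 3 * X" using Y unfolding X_def by simp
    have "b^2 = 3 * (3 * (X * Y))" using b2 X3 Y by simp
    then have "3 dvd b" using three_dvd_square_iff by (metis dvd_triv_left)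
    then obtain b' where "b = 3 * b'" by blast
    then have prod: "X * Y = b'^2" using \<open>b^2 = 3 * (3 * (X * Y))\<close> by (simp add: power_mult_distrib)
    have "coprime X Y"
    proof (rule coprimeI)
      fix k assume "k dvd X" "k dvd Y"
      then have "k dvd X + Y" "k dvd X - 2 * Y" by simp_all
      moreover have "X + Y = c^2" "X - 2 * Y = d^2" using Y unfolding X_def by simp_all
      moreover have "coprime (c^2) (d^2)" using cop by simp
      ultimately show "is_unit k" using coprime_common_divisor by metis
    qed
    moreover have "0 < X" "0 < Y" using X3 Y \<open>0 < 2 * c^2 + d^2\<close> \<open>0 < c^2 - d^2\<close> by simp_all
    ultimately obtain e f where e: "X = e^2" and f: "Y = f^2"
      using coprime_mult_eq_power_pos prod by metis
    have "coprime e f" using \<open>coprime X Y\<close> e f by simp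
    moreover have "f \<noteq> 0" using \<open>0 < Y\<close> f by auto
    moreover have "e^2 + f^2 = c^2" "e^2 - 2 * f^2 = d^2" using e f Y unfolding X_def by simp_all
    moreover have "\<bar>f\<bar> \<le> \<bar>c\<bar>"
      using abs_le_square_iff[of f c] \<open>e^2 + f^2 = c^2\<close> zero_le_power2[of e] by linarith
    ultimately show thesis using that by blast
  next
    case False
    then show thesis using not_square_eq_2sum_times_diff cop \<open>odd c\<close> \<open>odd d\<close> b2
      \<open>0 < c^2 - d^2\<close> by blast
  qed
qed

lemma sum_and_diff2_squares_descent_factorization:
  fixes a b r :: int
  assumes cop: "coprime a b" and "a \<noteq> 0" "odd r"
    and r2: "r^2 = (3 * a^2 + b^2)^2 - 4 * a^2 * b^2"
  obtains x y where "coprime x y" "\<bar>a\<bar> = \<bar>x * y\<bar>"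
    "b^2 = (y^2 + x^2) * (y^2 - 2 * x^2) \<or> (odd x \<and> b^2 = (2 * y^2 + x^2) * (y^2 - x^2))"
proof -
  define h where "h = a^2 + b^2"
  have diff: "r^2 - h^2 = 2 * (4 * a^4)"
    unfolding r2 h_def by (simp add: power2_eq_square power4_eq_xxxx algebra_simps)
  then have "h^2 = r^2 - 2 * (4 * a^4)" by simp
  then have "odd (h^2)" using \<open>odd r\<close> by simp
  then have "odd h" by simp
  moreover have "0 < h" using \<open>a \<noteq> 0\<close> unfolding h_def by (simp add: add_pos_nonneg)
  moreover have "0 < a^4" using \<open>a \<noteq> 0\<close> by simp
  then have "h^2 < r^2" using diff by linarith
  then have "\<bar>h\<bar> < \<bar>r\<bar>" using abs_le_square_iff[of r h] by linarith
  ultimately obtain P Q where PQ: "\<bar>r\<bar> = P + Q" "h = Q - P" "0 < P" "0 < Q"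
    and PQ4: "4 * (P * Q) = \<bar>r\<bar>^2 - h^2"
    using half_sum_and_difference[of "\<bar>r\<bar>" h] \<open>odd r\<close> by auto
  from PQ4 diff have prod: "P * Q = 2 * a^4" by simp
  have "coprime P Q"
  proof (rule coprimeI_mult_eq_small_multiple[OF prod])
    fix d assume "d dvd P" "d dvd Q"
    then have "d dvd h" using PQ(2) by simp
    have "coprime d a"
    proof (rule coprimeI)
      fix d' assume "d' dvd d" "d' dvd a"
      then have "d' dvd h - a * a" using \<open>d dvd h\<close> by (meson dvd_diff dvd_mult dvd_trans)
      then have "d' dvd b^2" unfolding h_def by (simp add: power2_eq_square)
      moreover have "coprime a (b^2)" using cop by simp
      ultimately show "is_unit d'" using coprime_common_divisor \<open>d' dvd a\<close> by blast
    qed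
    then show "coprime d (a^4)" by simp
  qed simp_all
  obtain x y where "coprime x y" "\<bar>a\<bar> = \<bar>x * y\<bar>"
    and PQ_xy: "(P = 2 * x^4 \<and> Q = y^4) \<or> (P = x^4 \<and> Q = 2 * y^4)"
    by (rule coprime_mult_eq_prime_times_power[OF _ \<open>coprime P Q\<close> prod PQ(3,4)]) auto
  have "a^2 = x^2 * y^2" using \<open>\<bar>a\<bar> = \<bar>x * y\<bar>\<close> by (metis power2_abs power_mult_distrib)
  then have b2: "b^2 = Q - P - x^2 * y^2" using PQ(2) unfolding h_def by simp
  have "odd \<bar>r\<bar>" using \<open>odd r\<close> by simp
  then have "odd (P + Q)" using PQ(1) by simp
  then have "b^2 = (y^2 + x^2) * (y^2 - 2 * x^2) \<or> (odd x \<and> b^2 = (2 * y^2 + x^2) * (y^2 - x^2))"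
    using PQ_xy b2 by (auto simp: power2_eq_square power4_eq_xxxx algebra_simps)
  then show thesis using that \<open>coprime x y\<close> \<open>\<bar>a\<bar> = \<bar>x * y\<bar>\<close> by blast
qed

lemma sum_and_diff2_squares_descent:
  fixes a b r :: int
  assumes cop: "coprime a b" and "a \<noteq> 0" "b \<noteq> 0" "odd r"
    and r2: "r^2 = (3 * a^2 + b^2)^2 - 4 * a^2 * b^2"
  obtains r' s' where "coprime r' s'" "s' \<noteq> 0" "\<bar>s'\<bar> \<le> \<bar>a\<bar>"
    "is_square (r'^2 + s'^2)" "is_square (r'^2 - 2 * s'^2)"
proof -
  obtain x y where "coprime x y" and a: "\<bar>a\<bar> = \<bar>x * y\<bar>"
    and b2: "b^2 = (y^2 + x^2) * (y^2 - 2 * x^2) \<or> (odd x \<and> b^2 = (2 * y^2 + x^2) * (y^2 - x^2))"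
    using sum_and_diff2_squares_descent_factorization assms by metis
  have "x \<noteq> 0" "y \<noteq> 0" using \<open>a \<noteq> 0\<close> a by auto
  then have "\<bar>x\<bar> * 1 \<le> \<bar>x\<bar> * \<bar>y\<bar>" "1 * \<bar>y\<bar> \<le> \<bar>x\<bar> * \<bar>y\<bar>"
    by (simp_all add: mult_left_mono mult_right_mono)
  then have "\<bar>x\<bar> \<le> \<bar>a\<bar>" "\<bar>y\<bar> \<le> \<bar>a\<bar>" using a by (simp_all add: abs_mult)
  from b2 show thesis
  proof
    assume "b^2 = (y^2 + x^2) * (y^2 - 2 * x^2)"
    then show thesis using square_eq_sum_times_diff2[of y x b] that[of y x] \<open>coprime x y\<close>
      \<open>x \<noteq> 0\<close> \<open>b \<noteq> 0\<close> \<open>\<bar>x\<bar> \<le> \<bar>a\<bar>\<close> by (simp add: coprime_commute)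
  next
    assume "odd x \<and> b^2 = (2 * y^2 + x^2) * (y^2 - x^2)"
    then obtain e f where "coprime e f" "f \<noteq> 0" "\<bar>f\<bar> \<le> \<bar>y\<bar>" "e^2 + f^2 = y^2" "e^2 - 2 * f^2 = x^2"
      using square_eq_2sum_times_diff[of y x b] \<open>coprime x y\<close> \<open>b \<noteq> 0\<close>
      by (metis coprime_commute)
    then show thesis using that[of e f] \<open>\<bar>y\<bar> \<le> \<bar>a\<bar>\<close> by simp
  qed
qed

lemma is_square_sum_and_diff2_imp_zero:
  fixes r s :: int
  assumes "coprime r s" "is_square (r^2 + s^2)" "is_square (r^2 - 2 * s^2)"
  shows "s = 0"
  using assms
proof (induction "nat \<bar>s\<bar>" arbitrary: r s rule: less_induct)
  case less
  show "s = 0"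
  proof (rule ccontr)
    assume "s \<noteq> 0"
    obtain m n where "r^2 + s^2 = m^2" "r^2 - 2 * s^2 = n^2"
      using less.prems(2,3) by (auto elim!: is_nth_powerE)
    then obtain a b where "coprime a b" and s2: "s^2 = 4 * a^2 * b^2"
      and "r^2 = (3 * a^2 + b^2)^2 - 4 * a^2 * b^2" "odd r"
      using sum_and_diff2_squares_parametrization less.prems(1) \<open>s \<noteq> 0\<close> by metis
    moreover have "a \<noteq> 0" "b \<noteq> 0" using s2 \<open>s \<noteq> 0\<close> by auto
    ultimately obtain r' s' where "coprime r' s'" "s' \<noteq> 0" "\<bar>s'\<bar> \<le> \<bar>a\<bar>"
      "is_square (r'^2 + s'^2)" "is_square (r'^2 - 2 * s'^2)"
      using sum_and_diff2_squares_descent by metis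
    moreover have "1 \<le> b^2" using \<open>b \<noteq> 0\<close> by (simp add: int_one_le_iff_zero_less)
    then have "a^2 * 1 < a^2 * (4 * b^2)" using \<open>a \<noteq> 0\<close> by (intro mult_strict_left_mono) simp_all
    then have "\<bar>a\<bar> < \<bar>s\<bar>" using s2 abs_le_square_iff[of s a] by (simp add: ac_simps)
    ultimately have "nat \<bar>s'\<bar> < nat \<bar>s\<bar>" by linarith
    then show False using less.hyps \<open>coprime r' s'\<close> \<open>is_square (r'^2 + s'^2)\<close>
      \<open>is_square (r'^2 - 2 * s'^2)\<close> \<open>s' \<noteq> 0\<close> by blast
  qed
qed

section \<open>The pair 2 r^2 - s^2, 2 s^2 - r^2\<close>

lemma double_diff_squares_parametrization:
  fixes r s m n :: int
  assumes cop: "coprime r s" and m: "2 * r^2 - s^2 = m^2" and n: "2 * s^2 - r^2 = n^2"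
    and "r^2 \<noteq> s^2"
  obtains \<alpha> \<beta> where "coprime \<alpha> \<beta>" "\<alpha> \<noteq> 0" "odd \<beta>"
    "(r^2 + s^2)^2 = 4 * ((\<alpha>^2 + \<beta>^2) * (4 * \<alpha>^2 + \<beta>^2))"
proof -
  have "odd r" "odd s"
    using odd_if_square_eq_diff_double_square[of r s n] odd_if_square_eq_diff_double_square[of s r m]
      cop m n by (simp_all add: coprime_commute)
  define K where "K = \<bar>r * s\<bar>"
  have "even (r^2 - s^2)" using \<open>odd r\<close> \<open>odd s\<close> by simp
  then obtain L where L: "r^2 - s^2 = 2 * L" by blast
  have "L \<noteq> 0" using L \<open>r^2 \<noteq> s^2\<close> by simp
  have "\<bar>m * n\<bar>^2 = m^2 * n^2" by (simp add: power_mult_distrib)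
  also have "\<dots> = (2 * r^2 - s^2) * (2 * s^2 - r^2)" using m n by simp
  also have "\<dots> = K^2 - 2 * (r^2 - s^2)^2"
    unfolding K_def by (simp add: power_mult_distrib power2_eq_square algebra_simps)
  finally have w2: "\<bar>m * n\<bar>^2 = K^2 - 2 * (2 * L)^2" unfolding L .
  have "odd (2 * r^2 - s^2)" "odd (2 * s^2 - r^2)" using \<open>odd r\<close> \<open>odd s\<close> by simp_all
  then have "odd m" "odd n" using m n by simp_all
  then have "odd K" "odd \<bar>m * n\<bar>" using \<open>odd r\<close> \<open>odd s\<close> unfolding K_def by simp_all
  moreover have "0 < L^2" using \<open>L \<noteq> 0\<close> by simp
  then have "\<bar>m * n\<bar> < K" using w2 abs_le_square_iff[of K "m * n"] unfolding K_def by simp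
  ultimately obtain P Q where PQ: "K = P + Q" "\<bar>m * n\<bar> = Q - P" "0 < P" "0 < Q"
    and PQ4: "4 * (P * Q) = K^2 - \<bar>m * n\<bar>^2"
    using half_sum_and_difference[of K "\<bar>m * n\<bar>"] by auto
  from PQ4 w2 have prod: "P * Q = 2 * L^2" by (simp add: power_mult_distrib)
  have "coprime P Q"
  proof (rule coprimeI_mult_eq_small_multiple[OF prod])
    fix d assume "d dvd P" "d dvd Q"
    then have "d dvd r * s" using PQ(1) unfolding K_def by (metis dvd_abs_iff dvd_add)
    moreover have "coprime (r * s) L" using coprime_mult_diff_squares[OF cop] unfolding L by simp
    ultimately have "coprime d L" using coprime_divisors dvd_refl by blast
    then show "coprime d (L^2)" by simp
  qed simp_all
  obtain x y where "coprime x y" "\<bar>L\<bar> = \<bar>x * y\<bar>"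
    and "(P = 2 * x^2 \<and> Q = y^2) \<or> (P = x^2 \<and> Q = 2 * y^2)"
    by (rule coprime_mult_eq_prime_times_power[OF _ \<open>coprime P Q\<close> prod PQ(3,4)]) auto
  then obtain \<alpha> \<beta> where "coprime \<alpha> \<beta>" "\<bar>L\<bar> = \<bar>\<alpha> * \<beta>\<bar>" and K: "K = 2 * \<alpha>^2 + \<beta>^2"
    using PQ(1) by (metis abs_mult_self_eq add.commute coprime_commute mult.commute)
  have L2: "L^2 = \<alpha>^2 * \<beta>^2" using \<open>\<bar>L\<bar> = \<bar>\<alpha> * \<beta>\<bar>\<close> by (metis power2_abs power_mult_distrib)
  have "\<alpha> \<noteq> 0" using L2 \<open>L \<noteq> 0\<close> by auto
  moreover have "odd \<beta>" using K \<open>odd K\<close> by simp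
  moreover have "(r^2 + s^2)^2 = (r^2 - s^2)^2 + 4 * K^2"
    unfolding K_def by (simp add: power2_eq_square algebra_simps)
  then have "(r^2 + s^2)^2 = 4 * ((\<alpha>^2 + \<beta>^2) * (4 * \<alpha>^2 + \<beta>^2))"
    unfolding L K power_mult_distrib L2 by (simp add: power2_eq_square algebra_simps)
  ultimately show thesis using that \<open>coprime \<alpha> \<beta>\<close> by blast
qed

lemma is_square_double_diffs_imp_eq:
  fixes r s :: int
  assumes cop: "coprime r s" and "is_square (2 * r^2 - s^2)" "is_square (2 * s^2 - r^2)"
  shows "r^2 = s^2"
proof (rule ccontr)
  assume "r^2 \<noteq> s^2"
  obtain m n where "2 * r^2 - s^2 = m^2" "2 * s^2 - r^2 = n^2"
    using assms(2,3) by (auto elim!: is_nth_powerE)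
  then obtain \<alpha> \<beta> where ab: "coprime \<alpha> \<beta>" "\<alpha> \<noteq> 0" "odd \<beta>"
    and sq: "(r^2 + s^2)^2 = 4 * ((\<alpha>^2 + \<beta>^2) * (4 * \<alpha>^2 + \<beta>^2))"
    using double_diff_squares_parametrization cop \<open>r^2 \<noteq> s^2\<close> by metis
  have "even ((r^2 + s^2)^2)" using sq by simp
  then have "even (r^2 + s^2)" by simp
  then obtain W where "r^2 + s^2 = 2 * W" by blast
  then have prod: "(\<alpha>^2 + \<beta>^2) * (4 * \<alpha>^2 + \<beta>^2) = W^2" using sq by (simp add: power_mult_distrib)
  have "coprime (\<alpha>^2 + \<beta>^2) (4 * \<alpha>^2 + \<beta>^2)"
  proof (rule coprimeI)
    fix k assume k: "k dvd \<alpha>^2 + \<beta>^2" "k dvd 4 * \<alpha>^2 + \<beta>^2"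
    have "(4 * \<alpha>^2 + \<beta>^2) - (\<alpha>^2 + \<beta>^2) = 3 * \<alpha>^2"
      "4 * (\<alpha>^2 + \<beta>^2) - (4 * \<alpha>^2 + \<beta>^2) = 3 * \<beta>^2"
      by simp_all
    then have "k dvd 3 * \<alpha>^2" "k dvd 3 * \<beta>^2" using k by (metis dvd_diff dvd_mult)+
    moreover have "\<not> 3 dvd k" using k(1) not_3_dvd_sum_of_coprime_squares ab(1) dvd_trans by blast
    ultimately show "is_unit k" using is_unit_if_dvd_3_times_coprime_squares ab(1) by blast
  qed
  moreover have "0 < \<alpha>^2 + \<beta>^2" "0 < 4 * \<alpha>^2 + \<beta>^2" using ab(2) by (simp_all add: add_pos_nonneg)
  ultimately have "is_square (\<alpha>^2 + \<beta>^2)" "is_square (4 * \<alpha>^2 + \<beta>^2)"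
    using coprime_mult_eq_power_pos prod by (metis is_nth_power_nth_power)+
  then show False using is_square_sum_and_4_sum_imp_zero ab by blast
qed

section \<open>Square classes of the products\<close>

lemma of_int_eq_rat_square_imp_is_square:
  fixes z :: int and q :: rat
  assumes "of_int z = q^2"
  shows "is_square z"
proof -
  obtain a b where qb: "quotient_of q = (a, b)" by (cases "quotient_of q") auto
  have b0: "b > 0" using quotient_of_denom_pos[OF qb] .
  have cab: "coprime a b" using quotient_of_coprime[OF qb] .
  have q: "q = of_int a / of_int b" using quotient_of_div[OF qb] .
  have "(of_int z :: rat) = of_int a ^ 2 / of_int b ^ 2" using assms q by (simp add: power_divide)
  then have "(of_int z :: rat) * of_int b ^ 2 = of_int a ^ 2" using b0 by (simp add: field_simps)
  then have "(of_int (z * b^2) :: rat) = of_int (a^2)" by simp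
  then have zb: "z * b^2 = a^2" by (simp only: of_int_eq_iff)
  then have "b^2 dvd a^2" by (metis dvd_triv_right)
  then have "b dvd a" by simp
  then have "is_unit b" using coprime_common_divisor[OF cab _ dvd_refl] by blast
  then have "b = 1" using b0 by auto
  then show ?thesis using zb by (auto intro: is_nth_powerI)
qed

lemma same_sq_class_of_int_imp:
  fixes x y :: int
  assumes "same_sq_class (of_int x) (of_int y)"
  shows "x * y \<noteq> 0" "is_square (x * y)"
proof -
  obtain q :: rat where "x \<noteq> 0" "y \<noteq> 0" "of_int x / of_int y = q^2"
    using assms unfolding same_sq_class_def by auto
  then have "(of_int (x * y) :: rat) = (q * of_int y)^2" by (simp add: field_simps power2_eq_square)
  then show "is_square (x * y)" by (rule of_int_eq_rat_square_imp_is_square)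
  show "x * y \<noteq> 0" using \<open>x \<noteq> 0\<close> \<open>y \<noteq> 0\<close> by simp
qed

lemma is_square_abs_mult_square_cancel:
  fixes a n :: int
  assumes "is_square \<bar>a^2 * n\<bar>" "a \<noteq> 0"
  shows "is_square \<bar>n\<bar>"
  using assms is_nth_power_mult_cancel_left[of 2 "a^2" "\<bar>n\<bar>"] by (simp add: abs_mult)

lemma square_class_reduction:
  fixes u v t c x y :: int
  assumes x: "\<bar>x\<bar> \<in> {\<bar>u * (3 * t^2)\<bar>, \<bar>u * c\<bar>, \<bar>v * (3 * t^2)\<bar>, \<bar>v * c\<bar>}"
    and y: "\<bar>y\<bar> \<in> {\<bar>u * v\<bar>, \<bar>3 * t^2 * c\<bar>}"
    and "is_square (x * y)" "x * y \<noteq> 0"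
  shows "is_square \<bar>3 * u\<bar> \<or> is_square \<bar>3 * v\<bar> \<or> is_square \<bar>u * c\<bar> \<or> is_square \<bar>v * c\<bar>"
proof -
  obtain X Y where X: "X \<in> {u * (3 * t^2), u * c, v * (3 * t^2), v * c}" "\<bar>x\<bar> = \<bar>X\<bar>"
    and Y: "Y \<in> {u * v, 3 * t^2 * c}" "\<bar>y\<bar> = \<bar>Y\<bar>"
    using x y by blast
  have "\<bar>x * y\<bar> = \<bar>X * Y\<bar>" using X(2) Y(2) by (simp add: abs_mult)
  moreover have "is_square \<bar>x * y\<bar>"
    using \<open>is_square (x * y)\<close> by (auto elim!: is_nth_powerE)
  ultimately have sq: "is_square \<bar>X * Y\<bar>" and "X * Y \<noteq> 0" using \<open>x * y \<noteq> 0\<close> by auto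
  have reduce: "is_square \<bar>n\<bar>" if "X * Y = a^2 * n" for a n
    using is_square_abs_mult_square_cancel[of a n] sq \<open>X * Y \<noteq> 0\<close> that by auto
  \<comment> \<open>each of the eight products is a square times 3 u, 3 v, u c or v c,
    e.g. u (3 t^2) * u v = (t u)^2 * 3 v\<close>
  consider "X = u * (3 * t^2)" | "X = u * c" | "X = v * (3 * t^2)" | "X = v * c"
    using X(1) by blast
  then show ?thesis
  proof cases
    case 1
    then show ?thesis using Y(1) reduce[of "t * u" "3 * v"] reduce[of "3 * t^2" "u * c"]
      by (auto simp: power2_eq_square algebra_simps)
  next
    case 2
    then show ?thesis using Y(1) reduce[of u "v * c"] reduce[of "t * c" "3 * u"]
      by (auto simp: power2_eq_square algebra_simps)
  next
    case 3
    then show ?thesis using Y(1) reduce[of "t * v" "3 * u"] reduce[of "3 * t^2" "v * c"]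
      by (auto simp: power2_eq_square algebra_simps)
  next
    case 4
    then show ?thesis using Y(1) reduce[of v "u * c"] reduce[of "t * c" "3 * v"]
      by (auto simp: power2_eq_square algebra_simps)
  qed
qed

lemma not_is_square_abs_3_times:
  fixes n :: int
  assumes "\<not> 3 dvd n"
  shows "\<not> is_square \<bar>3 * n\<bar>"
proof
  assume "is_square \<bar>3 * n\<bar>"
  then obtain j where j: "\<bar>3 * n\<bar> = j^2" by (auto elim: is_nth_powerE)
  then have "j^2 = 3 * \<bar>n\<bar>" by (simp add: abs_mult)
  then have "3 dvd j^2" by simp
  then obtain j' where "j = 3 * j'" using three_dvd_square_iff by (meson dvdE)
  then have "\<bar>n\<bar> = 3 * j'^2" using j by (simp add: abs_mult power_mult_distrib)
  then show False using assms by (metis dvd_abs_iff dvd_triv_left)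
qed

lemma not_is_square_abs_sum_times_double_diff:
  fixes r s :: int
  assumes cop: "coprime r s" and "s \<noteq> 0"
  shows "\<not> is_square \<bar>(r^2 + s^2) * (2 * s^2 - r^2)\<bar>"
proof
  define u c where "u = r^2 + s^2" and "c = 2 * s^2 - r^2"
  assume "is_square \<bar>u * c\<bar>"
  then obtain j where "\<bar>u * c\<bar> = j^2" by (rule is_nth_powerE)
  moreover have "0 < u" using \<open>s \<noteq> 0\<close> unfolding u_def by (simp add: add_nonneg_pos)
  ultimately have j: "u * \<bar>c\<bar> = j^2" by (simp add: abs_mult)
  have "c \<noteq> 0" using square_ne_double_square_if_coprime[of r s] cop unfolding c_def by auto
  have "coprime u c"
  proof (rule coprimeI)
    fix k assume k: "k dvd u" "k dvd c"
    have "u + c = 3 * s^2" "2 * u - c = 3 * r^2" unfolding u_def c_def by simp_all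
    then have "k dvd 3 * r^2" "k dvd 3 * s^2" using k by (metis dvd_add dvd_diff dvd_mult)+
    moreover have "\<not> 3 dvd k"
      using k(1) not_3_dvd_sum_of_coprime_squares[OF cop] dvd_trans unfolding u_def by blast
    ultimately show "is_unit k" using is_unit_if_dvd_3_times_coprime_squares cop by blast
  qed
  then have "coprime u \<bar>c\<bar>" by simp
  moreover have "0 < \<bar>c\<bar>" using \<open>c \<noteq> 0\<close> by simp
  ultimately obtain m n where m: "u = m^2" and n: "\<bar>c\<bar> = n^2"
    using coprime_mult_eq_power_pos[of u "\<bar>c\<bar>" j 2] j \<open>0 < u\<close> by blast
  show False
  proof (cases "0 < c")
    case True
    then have "m^2 + n^2 = 3 * s^2" using m n unfolding u_def c_def by simp
    then have "3 dvd m" using three_dvd_sum_of_squares(1)[of m n] by simp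
    then have "3 dvd u" using m by (simp add: three_dvd_square_iff)
    then show False using not_3_dvd_sum_of_coprime_squares[OF cop] unfolding u_def by blast
  next
    case False
    then have "r^2 - 2 * s^2 = n^2" using n \<open>c \<noteq> 0\<close> unfolding c_def by simp
    then have "s = 0" using is_square_sum_and_diff2_imp_zero[OF cop] m unfolding u_def by simp
    then show False using \<open>s \<noteq> 0\<close> by blast
  qed
qed

lemma is_square_abs_double_diffs_imp_eq:
  fixes r s :: int
  assumes cop: "coprime r s" and "is_square \<bar>(2 * r^2 - s^2) * (2 * s^2 - r^2)\<bar>"
  shows "r^2 = s^2"
proof -
  define v c where "v = 2 * r^2 - s^2" and "c = 2 * s^2 - r^2"
  obtain j where j: "\<bar>v\<bar> * \<bar>c\<bar> = j^2"
    using assms(2) unfolding v_def c_def abs_mult by (rule is_nth_powerE)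
  have "v \<noteq> 0" "c \<noteq> 0"
    using square_ne_double_square_if_coprime[of r s] square_ne_double_square_if_coprime[of s r] cop
    unfolding v_def c_def by (auto simp: coprime_commute)
  have "coprime v c"
  proof (rule coprimeI)
    fix k assume k: "k dvd v" "k dvd c"
    have "2 * v + c = 3 * r^2" "v + 2 * c = 3 * s^2" unfolding v_def c_def by simp_all
    then have "k dvd 3 * r^2" "k dvd 3 * s^2" using k by (metis dvd_add dvd_mult)+
    moreover have "\<not> 3 dvd k"
      using k(1) not_3_dvd_double_diff_of_coprime_squares[OF cop] dvd_trans unfolding v_def by blast
    ultimately show "is_unit k" using is_unit_if_dvd_3_times_coprime_squares cop by blast
  qed
  then have "coprime \<bar>v\<bar> \<bar>c\<bar>" by simp
  moreover have "0 < \<bar>v\<bar>" "0 < \<bar>c\<bar>" using \<open>v \<noteq> 0\<close> \<open>c \<noteq> 0\<close> by simp_all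
  ultimately obtain m n where m: "\<bar>v\<bar> = m^2" and n: "\<bar>c\<bar> = n^2"
    using coprime_mult_eq_power_pos[of "\<bar>v\<bar>" "\<bar>c\<bar>" j 2] j by blast
  have "v + c = r^2 + s^2" "v - c = 3 * (r^2 - s^2)" unfolding v_def c_def by simp_all
  consider "0 < v" "0 < c" | "v < 0" "c < 0" | "\<bar>v - c\<bar> = m^2 + n^2" "\<bar>v + c\<bar> = \<bar>m^2 - n^2\<bar>"
    using m n \<open>v \<noteq> 0\<close> \<open>c \<noteq> 0\<close> by (cases "0 < v"; cases "0 < c") auto
  then show ?thesis
  proof cases
    case 1
    then show ?thesis
      using is_square_double_diffs_imp_eq[OF cop] m n unfolding v_def c_def by simp
  next
    case 2
    then show ?thesis using \<open>v + c = r^2 + s^2\<close> by (smt (verit) zero_le_power2)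
  next
    case 3
    \<comment> \<open>opposite signs: 3 divides v - c, hence m and n, hence v + c = r^2 + s^2\<close>
    then have "3 dvd m^2 + n^2" using \<open>v - c = 3 * (r^2 - s^2)\<close> by (metis abs_mult dvd_abs_iff dvd_triv_left)
    then have "3 dvd m" "3 dvd n" using three_dvd_sum_of_squares by blast+
    then have "3 dvd m^2 - n^2" by (simp add: three_dvd_square_iff)
    then have "3 dvd r^2 + s^2" using 3 \<open>v + c = r^2 + s^2\<close> by (metis dvd_abs_iff)
    then show ?thesis using not_3_dvd_sum_of_coprime_squares[OF cop] by blast
  qed
qed

lemma same_sq_class_Sset_Tset_imp_abs_le_1:
  fixes r s x y :: int
  assumes cop: "coprime r s" and "x \<in> Sset r s" "y \<in> Tset r s"
    and "same_sq_class (of_int x) (of_int y)"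
  shows "\<bar>r\<bar> \<le> 1 \<and> \<bar>s\<bar> \<le> 1"
proof -
  define u v c where "u = uval r s" and "v = vval r s" and "c = 2 * s^2 - r^2"
  have uv: "u + v = 3 * r^2" "u - v = c" "u^2 - v^2 = 3 * r^2 * c"
    unfolding u_def v_def c_def uval_def vval_def by (simp_all add: power2_eq_square algebra_simps)
  have "\<bar>x\<bar> \<in> {\<bar>u * (3 * r^2)\<bar>, \<bar>u * c\<bar>, \<bar>v * (3 * r^2)\<bar>, \<bar>v * c\<bar>}"
    using assms(2) unfolding Sset_def Let_def u_def[symmetric] v_def[symmetric] uv(1,2) by auto
  moreover have "\<bar>y\<bar> \<in> {\<bar>u * v\<bar>, \<bar>3 * r^2 * c\<bar>}"
    using assms(3) unfolding Tset_def Let_def u_def[symmetric] v_def[symmetric] uv(3) by auto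
  moreover have "is_square (x * y)" "x * y \<noteq> 0" using same_sq_class_of_int_imp assms(4) by blast+
  ultimately have "is_square \<bar>3 * u\<bar> \<or> is_square \<bar>3 * v\<bar> \<or> is_square \<bar>u * c\<bar> \<or> is_square \<bar>v * c\<bar>"
    by (rule square_class_reduction)
  moreover have "\<not> is_square \<bar>3 * u\<bar>" "\<not> is_square \<bar>3 * v\<bar>"
    using not_is_square_abs_3_times not_3_dvd_sum_of_coprime_squares[OF cop]
      not_3_dvd_double_diff_of_coprime_squares[OF cop]
    unfolding u_def v_def uval_def vval_def by blast+
  \<comment> \<open>s = 0 is a genuine exception: then u c = -r^4\<close>
  ultimately have "s = 0 \<or> r^2 = s^2"
    using not_is_square_abs_sum_times_double_diff[OF cop] is_square_abs_double_diffs_imp_eq[OF cop]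
    unfolding u_def v_def c_def uval_def vval_def by blast
  then show ?thesis
  proof
    assume "s = 0"
    then show ?thesis using cop by simp
  next
    assume "r^2 = s^2"
    then have "\<bar>r\<bar> = \<bar>s\<bar>" using abs_le_square_iff by (metis order_antisym order_refl)
    then have "is_unit r" using cop by (metis coprime_common_divisor dvd_abs_iff dvd_refl)
    then show ?thesis using \<open>\<bar>r\<bar> = \<bar>s\<bar>\<close> by simp
  qed
qed

theorem lemma6p4:
  shows "finite {p :: int \<times> int. coprime (fst p) (snd p) \<and> fst p \<noteq> 0 \<and>
            (\<exists>x \<in> Sset (fst p) (snd p). \<exists>y \<in> Tset (fst p) (snd p).
               same_sq_class (of_int x) (of_int y))}"
proof (rule finite_subset)
  show "finite ({-1..1} \<times> {-1..1} :: (int \<times> int) set)" by simp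
  show "{p :: int \<times> int. coprime (fst p) (snd p) \<and> fst p \<noteq> 0 \<and>
          (\<exists>x \<in> Sset (fst p) (snd p). \<exists>y \<in> Tset (fst p) (snd p).
             same_sq_class (of_int x) (of_int y))} \<subseteq> {-1..1} \<times> {-1..1}"
    using same_sq_class_Sset_Tset_imp_abs_le_1 by fastforce
qed

end
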